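(* Let $s_1,s_2\in\mathcal S$ and let $s,s'\in\mathcal S$ both lie in the plane $\mathrm{Span}\{s_1,s_2\}$. Let $\vec\beta\in T_s\mathcal S$ and $\vec\beta'\in T_{s'}\mathcal S$ (each of $\eta$-norm $<1$) be the unique vectors with $B(s,\vec\beta)s_1=s_2$ and $B(s',\vec\beta')s_1=s_2$. Then $$B(s,\vec\beta)=B(s',\vec\beta')=\mathrm{id}_V+\frac{s_1\otimes s_1+s_2\otimes s_2+s_1\wedge s_2-2\gamma_{12}\,s_2\otimes s_1}{1+\gamma_{12}},$$ where $\gamma_{12}=-\eta(s_1,s_2)$. In particular all boosts linking $s_1$ to $s_2$ whose reference state lies in $\mathrm{Span}\{s_1,s_2\}$ coincide.
   Context: $V$ is a 4-dimensional real vector space with a symmetric non-degenerate bilinear form $\eta$ of signature $(-,+,+,+)$. $\mathcal S$ is one fixed connected component of $\{v\in V:\eta(v,v)=-1\}$. For $s\in\mathcal S$, $T_s\mathcal S:=\{u\in V:\eta(u,s)=0\}$. Endomorphisms are written via $(u\otimes v)(w):=\eta(v,w)u$ and $u\wedge v:=u\otimes v-v\otimes u$. For $s\in\mathcal S$ and $\vec\beta\in T_s\mathcal S$ with $\beta^2:=\eta(\vec\beta,\vec\beta)<1$, $\beta>0$, $\vec n=\vec\beta/\beta$, $\gamma=(1-\beta^2)^{-1/2}$, the boost relative to $s$ is $B(s,\vec\beta)=\mathrm{id}_V+(\gamma-1)(-s\otimes s+\vec n\otimes\vec n)+\beta\gamma(s\otimes\vec n-\vec n\otimes s)$, and $B(s,0)=\mathrm{id}_V$.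 For any $s,s_1,s_2\in\mathcal S$ there is a unique such $\vec\beta\in T_s\mathcal S$ with $B(s,\vec\beta)s_1=s_2$. *)

theory Defs
  imports "HOL-Analysis.Analysis"
begin

definition tens :: "('a::real_vector \<Rightarrow> 'a \<Rightarrow> real) \<Rightarrow> 'a \<Rightarrow> 'a \<Rightarrow> ('a \<Rightarrow> 'a)" where
  "tens eta u v = (\<lambda>w. eta v w *\<^sub>R u)"

definition wedge :: "('a::real_vector \<Rightarrow> 'a \<Rightarrow> real) \<Rightarrow> 'a \<Rightarrow> 'a \<Rightarrow> ('a \<Rightarrow> 'a)" where
  "wedge eta u v = (\<lambda>w. tens eta u v w - tens eta v u w)"

definition lorentz_form :: "('a::euclidean_space \<Rightarrow> 'a \<Rightarrow> real) \<Rightarrow> bool" where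
  "lorentz_form eta \<longleftrightarrow> DIM('a) = 4 \<and> bilinear eta \<and> (\<forall>u v. eta u v = eta v u)
     \<and> (\<forall>u. (\<forall>v. eta u v = 0) \<longrightarrow> u = 0)
     \<and> (\<exists>e :: nat \<Rightarrow> 'a. \<forall>i<4. \<forall>j<4.
          eta (e i) (e j) = (if i = j then (if i = 0 then -1 else 1) else 0))"

definition hyperboloid :: "('a::real_vector \<Rightarrow> 'a \<Rightarrow> real) \<Rightarrow> 'a set" where
  "hyperboloid eta = {v. eta v v = -1}"

definition tangent :: "('a::real_vector \<Rightarrow> 'a \<Rightarrow> real) \<Rightarrow> 'a \<Rightarrow> 'a set" where
  "tangent eta s = {u. eta u s = 0}"

definition boost :: "('a::real_vector \<Rightarrow> 'a \<Rightarrow> real) \<Rightarrow> 'a \<Rightarrow> 'a \<Rightarrow> ('a \<Rightarrow> 'a)" where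
  "boost eta s b =
    (if b = 0 then id else
     (let \<beta> = sqrt (eta b b); n = (1 / \<beta>) *\<^sub>R b; \<gamma> = 1 / sqrt (1 - \<beta>\<^sup>2) in
      (\<lambda>w. w + (\<gamma> - 1) *\<^sub>R (- tens eta s s w + tens eta n n w)
             + (\<beta> * \<gamma>) *\<^sub>R (tens eta s n w - tens eta n s w))))"

end

theory Submission
  imports Defs
begin

text \<open>For \<open>\<beta> \<noteq> 0\<close> the boost \<open>B(s,\<beta>)\<close> is a hyperbolic rotation of the timelike plane
  \<open>P = span {s, n}\<close>, \<open>n = \<beta>/|\<beta>|\<close>, fixing \<open>P\<^sup>\<bottom>\<close> pointwise. So \<open>s\<^sub>1\<close> and \<open>s\<^sub>2 = B s\<^sub>1\<close> have the
  same component \<open>r\<close> in \<open>P\<^sup>\<bottom>\<close>, and pairing \<open>s = x s\<^sub>1 + y s\<^sub>2\<close> with \<open>r\<close> gives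
  \<open>(x + y) \<eta>(r,r) = 0\<close>. As \<open>P\<^sup>\<bottom> \<subseteq> T\<^sub>sS\<close> is spacelike (reverse Cauchy--Schwarz), \<open>r \<noteq> 0\<close>
  would make \<open>s\<close> a multiple of \<open>s\<^sub>1 - s\<^sub>2 \<in> P\<close>, which is spacelike, not timelike. Hence
  \<open>s\<^sub>1, s\<^sub>2 \<in> P\<close>, and inside \<open>P\<close> a direct computation, using \<open>\<eta>(s\<^sub>1,s\<^sub>2) = -\<gamma>\<close>, shows that the
  rotation agrees with the stated formula, which only involves \<open>s\<^sub>1\<close> and \<open>s\<^sub>2\<close>.\<close>

lemma orthogonal_basis_expansion:
  fixes eta :: "'a::euclidean_space \<Rightarrow> 'a \<Rightarrow> real" and e :: "nat \<Rightarrow> 'a" and \<epsilon> :: "nat \<Rightarrow> real"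
  assumes eta: "bilinear eta"
    and e: "\<And>i j. i < DIM('a) \<Longrightarrow> j < DIM('a) \<Longrightarrow> eta (e i) (e j) = (if i = j then \<epsilon> i else 0)"
    and \<epsilon>: "\<And>i. i < DIM('a) \<Longrightarrow> \<epsilon> i \<noteq> 0"
  shows "v = (\<Sum>i<DIM('a). (eta (e i) v / \<epsilon> i) *\<^sub>R e i)"
proof -
  let ?n = "DIM('a)"
  have pair: "eta (e j) (\<Sum>i<?n. f i *\<^sub>R e i) = f j * \<epsilon> j" if "j < ?n" for f j
  proof -
    have "eta (e j) (\<Sum>i<?n. f i *\<^sub>R e i) = (\<Sum>i<?n. f i * eta (e j) (e i))"
      using eta by (simp add: bilinear_def linear_sum bilinear_rmul)
    also have "\<dots> = f j * \<epsilon> j"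
      using that by (simp add: e if_distrib cong: if_cong)
    finally show ?thesis .
  qed
  have inj: "inj_on e {..<?n}"
    using e \<epsilon> by (metis inj_onI lessThan_iff)
  have sum_image: "(\<Sum>x\<in>e ` {..<?n}. f x *\<^sub>R x) = (\<Sum>i<?n. f (e i) *\<^sub>R e i)" for f
    using sum.reindex[OF inj] by simp
  have "independent (e ` {..<?n})"
  proof (rule independent_if_scalars_zero)
    fix f x assume "(\<Sum>x\<in>e ` {..<?n}. f x *\<^sub>R x) = 0" and "x \<in> e ` {..<?n}"
    then show "f x = 0"
      using pair[of _ "f \<circ> e"] \<epsilon> bilinear_rzero[OF eta] by (auto simp: sum_image)
  qed simp
  then have "UNIV \<subseteq> span (e ` {..<?n})"
    using card_ge_dim_independent[of "e ` {..<?n}" UNIV] by (simp add: card_image[OF inj])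
  then obtain u where "v = (\<Sum>x\<in>e ` {..<?n}. u x *\<^sub>R x)"
    using span_finite[of "e ` {..<?n}"] by auto
  then have v: "v = (\<Sum>i<?n. u (e i) *\<^sub>R e i)"
    by (simp add: sum_image)
  have "u (e i) = eta (e i) v / \<epsilon> i" if "i < ?n" for i
    using pair[OF that, of "u \<circ> e"] \<epsilon>[OF that] v by simp
  then show ?thesis
    by (subst v) (auto intro: sum.cong)
qed

lemma orthogonal_basis_form_expansion:
  fixes eta :: "'a::euclidean_space \<Rightarrow> 'a \<Rightarrow> real" and e :: "nat \<Rightarrow> 'a" and \<epsilon> :: "nat \<Rightarrow> real"
  assumes eta: "bilinear eta"
    and e: "\<And>i j. i < DIM('a) \<Longrightarrow> j < DIM('a) \<Longrightarrow> eta (e i) (e j) = (if i = j then \<epsilon> i else 0)"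
    and \<epsilon>: "\<And>i. i < DIM('a) \<Longrightarrow> \<epsilon> i \<noteq> 0"
  shows "eta v w = (\<Sum>i<DIM('a). eta (e i) v * eta (e i) w / \<epsilon> i)"
proof -
  have lin: "linear (\<lambda>x. eta x w)"
    using eta by (simp add: bilinear_def)
  have "eta v w = eta (\<Sum>i<DIM('a). (eta (e i) v / \<epsilon> i) *\<^sub>R e i) w"
    using orthogonal_basis_expansion[OF eta e \<epsilon>] by metis
  also have "\<dots> = (\<Sum>i<DIM('a). eta (e i) v * eta (e i) w / \<epsilon> i)"
    by (simp add: linear_sum[OF lin] bilinear_lmul[OF eta])
  finally show ?thesis .
qed

lemma reverse_cauchy_schwarz:
  fixes x y :: "'i \<Rightarrow> real"
  assumes x: "(\<Sum>i\<in>I. (x i)\<^sup>2) = x0\<^sup>2 - 1" and xy: "(\<Sum>i\<in>I. y i * x i) = y0 * x0"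
  shows "y0\<^sup>2 \<le> (\<Sum>i\<in>I. (y i)\<^sup>2)" and "y0\<^sup>2 = (\<Sum>i\<in>I. (y i)\<^sup>2) \<Longrightarrow> y0 = 0"
proof -
  define Y where "Y = (\<Sum>i\<in>I. (y i)\<^sup>2)"
  have Y: "0 \<le> Y" and x0: "0 < x0\<^sup>2"
    using x sum_nonneg[of I "\<lambda>i. (x i)\<^sup>2"] by (auto simp: Y_def sum_nonneg)
  have cs: "y0\<^sup>2 * x0\<^sup>2 \<le> Y * x0\<^sup>2 - Y"
    using Cauchy_Schwarz_ineq_sum[of y x I]
    by (simp add: xy x Y_def power_mult_distrib right_diff_distrib)
  then have "y0\<^sup>2 * x0\<^sup>2 \<le> Y * x0\<^sup>2"
    using Y by linarith
  then show "y0\<^sup>2 \<le> Y"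
    using x0 by (rule mult_right_le_imp_le)
  show "y0 = 0" if "y0\<^sup>2 = Y"
    using cs Y that by simp
qed

lemma lorentz_form_tangent_spacelike:
  fixes eta :: "'a::euclidean_space \<Rightarrow> 'a \<Rightarrow> real"
  assumes eta: "lorentz_form eta" and s: "eta s s = -1" and u: "eta u s = 0"
  shows "0 \<le> eta u u" and "eta u u = 0 \<Longrightarrow> u = 0"
proof -
  obtain e :: "nat \<Rightarrow> 'a" where dim: "DIM('a) = 4" and bil: "bilinear eta"
    and e: "\<And>i j. i < DIM('a) \<Longrightarrow> j < DIM('a) \<Longrightarrow>
              eta (e i) (e j) = (if i = j then (if i = 0 then -1 else 1) else 0)"
    using eta unfolding lorentz_form_def by (metis (no_types, lifting))
  have form: "eta v w = - eta (e 0) v * eta (e 0) w + (\<Sum>i<3. eta (e (Suc i)) v * eta (e (Suc i)) w)"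
    for v w
    using orthogonal_basis_form_expansion[OF bil e, of v w]
    by (simp add: dim eval_nat_numeral)
  have "(\<Sum>i<3. (eta (e (Suc i)) s)\<^sup>2) = (eta (e 0) s)\<^sup>2 - 1"
    using form[of s s] s by (simp add: power2_eq_square)
  moreover have "(\<Sum>i<3. eta (e (Suc i)) u * eta (e (Suc i)) s) = eta (e 0) u * eta (e 0) s"
    using form[of u s] u by simp
  ultimately have rcs: "(eta (e 0) u)\<^sup>2 \<le> (\<Sum>i<3. (eta (e (Suc i)) u)\<^sup>2)"
    "(eta (e 0) u)\<^sup>2 = (\<Sum>i<3. (eta (e (Suc i)) u)\<^sup>2) \<Longrightarrow> eta (e 0) u = 0"
    by (rule reverse_cauchy_schwarz)+
  have uu: "eta u u = - (eta (e 0) u)\<^sup>2 + (\<Sum>i<3. (eta (e (Suc i)) u)\<^sup>2)"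
    using form[of u u] by (simp add: power2_eq_square)
  show "0 \<le> eta u u"
    using rcs(1) uu by linarith
  assume "eta u u = 0"
  then have "eta (e 0) u = 0" and "(\<Sum>i<3. (eta (e (Suc i)) u)\<^sup>2) = 0"
    using rcs(2) uu by simp_all
  then have "eta u w = 0" for w
    using form[of u w] by (simp add: sum_nonneg_eq_0_iff)
  then show "u = 0"
    using eta unfolding lorentz_form_def by blast
qed

text \<open>With \<open>g = cosh \<phi>\<close>, \<open>h = sinh \<phi>\<close> this is the boost of rapidity \<open>\<phi>\<close> in the direction \<open>n\<close>.\<close>

definition hyperbolic_rotation :: "('a::real_vector \<Rightarrow> 'a \<Rightarrow> real) \<Rightarrow> 'a \<Rightarrow> 'a \<Rightarrow> real \<Rightarrow> real \<Rightarrow> 'a \<Rightarrow> 'a"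
  where "hyperbolic_rotation eta s n g h w =
    w + (g - 1) *\<^sub>R (eta n w *\<^sub>R n - eta s w *\<^sub>R s) + h *\<^sub>R (eta n w *\<^sub>R s - eta s w *\<^sub>R n)"

definition link_boost :: "('a::real_vector \<Rightarrow> 'a \<Rightarrow> real) \<Rightarrow> 'a \<Rightarrow> 'a \<Rightarrow> 'a \<Rightarrow> 'a"
  where "link_boost eta s1 s2 = (\<lambda>w. w + (1 / (1 + (- eta s1 s2))) *\<^sub>R
    (tens eta s1 s1 w + tens eta s2 s2 w + wedge eta s1 s2 w - (2 * (- eta s1 s2)) *\<^sub>R tens eta s2 s1 w))"

lemma linear_hyperbolic_rotation:
  assumes "bilinear eta"
  shows "linear (hyperbolic_rotation eta s n g h)"
  using assms by (intro linearI) (simp_all add: hyperbolic_rotation_def bilinear_radd bilinear_rmul algebra_simps)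

lemma link_boost_self:
  assumes "eta s1 s1 = -1"
  shows "link_boost eta s1 s1 = id"
  using assms by (simp add: link_boost_def tens_def wedge_def id_def flip: scaleR_add_left)

lemma span_pair_coordinates:
  assumes "v \<in> span {u, w}"
  obtains c a where "v = c *\<^sub>R u + a *\<^sub>R w"
proof -
  from assms obtain c where "v - c *\<^sub>R u \<in> span {w}"
    by (auto simp: span_breakdown_eq)
  then obtain a where "v - c *\<^sub>R u = a *\<^sub>R w"
    by (auto simp: span_singleton)
  then show thesis
    using that[of c a] by (simp add: algebra_simps)
qed

locale timelike_frame =
  fixes eta :: "'a::real_vector \<Rightarrow> 'a \<Rightarrow> real" and s n :: 'a
  assumes bilinear: "bilinear eta" and symmetric: "\<And>u v. eta u v = eta v u"
    and s_unit: "eta s s = -1" and n_unit: "eta n n = 1" and n_orthogonal: "eta n s = 0"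
begin

lemmas bilinear_simps = bilinear_ladd[OF bilinear] bilinear_radd[OF bilinear]
  bilinear_lmul[OF bilinear] bilinear_rmul[OF bilinear]
  bilinear_lsub[OF bilinear] bilinear_rsub[OF bilinear]
  bilinear_lneg[OF bilinear] bilinear_rneg[OF bilinear]

lemma s_orthogonal: "eta s n = 0"
  using n_orthogonal symmetric by metis

lemma form_plane: "eta (p *\<^sub>R s + q *\<^sub>R n) (p' *\<^sub>R s + q' *\<^sub>R n) = q * q' - p * p'"
  by (simp add: bilinear_simps s_unit n_unit n_orthogonal s_orthogonal)

lemma hyperbolic_rotation_plane:
  "hyperbolic_rotation eta s n g h (c *\<^sub>R s + a *\<^sub>R n) = (g * c + h * a) *\<^sub>R s + (g * a + h * c) *\<^sub>R n"
  by (simp add: hyperbolic_rotation_def bilinear_simps s_unit n_unit n_orthogonal s_orthogonal algebra_simps)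

lemma hyperbolic_rotation_orthogonal:
  assumes "eta r s = 0" and "eta r n = 0"
  shows "hyperbolic_rotation eta s n g h r = r"
  using assms symmetric by (simp add: hyperbolic_rotation_def)

lemma orthogonal_decomposition:
  obtains c a r where "v = (c *\<^sub>R s + a *\<^sub>R n) + r" and "eta r s = 0" and "eta r n = 0"
proof
  show "v = ((- eta s v) *\<^sub>R s + eta n v *\<^sub>R n) + (v - ((- eta s v) *\<^sub>R s + eta n v *\<^sub>R n))"
    by simp
qed (use symmetric[of v] symmetric[of v n] in
      \<open>simp_all add: bilinear_simps s_unit n_unit n_orthogonal s_orthogonal\<close>)

lemma hyperbolic_rotation_displacement:
  fixes c a :: real
  assumes h: "h\<^sup>2 = g\<^sup>2 - 1"
  defines "p \<equiv> c *\<^sub>R s + a *\<^sub>R n"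
  shows "eta (p - hyperbolic_rotation eta s n g h p) (p - hyperbolic_rotation eta s n g h p)
    = 2 * (g - 1) * (c\<^sup>2 - a\<^sup>2)"
proof -
  have "p - hyperbolic_rotation eta s n g h p = ((1 - g) * c - h * a) *\<^sub>R s + ((1 - g) * a - h * c) *\<^sub>R n"
    unfolding p_def hyperbolic_rotation_plane by (simp add: algebra_simps)
  then have "eta (p - hyperbolic_rotation eta s n g h p) (p - hyperbolic_rotation eta s n g h p)
      = ((1 - g) * a - h * c)\<^sup>2 - ((1 - g) * c - h * a)\<^sup>2"
    by (simp add: form_plane power2_eq_square)
  also have "\<dots> = 2 * (g - 1) * (c\<^sup>2 - a\<^sup>2)"
    using h by algebra
  finally show ?thesis .
qed

lemma hyperbolic_rotation_start_in_plane:
  assumes spacelike: "\<And>u. eta u s = 0 \<Longrightarrow> u \<noteq> 0 \<Longrightarrow> 0 < eta u u"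
    and g: "1 \<le> g" and h: "h\<^sup>2 = g\<^sup>2 - 1"
    and s1: "eta s1 s1 = -1" and s_span: "s \<in> span {s1, hyperbolic_rotation eta s n g h s1}"
  shows "s1 \<in> span {s, n}"
proof -
  let ?B = "hyperbolic_rotation eta s n g h"
  obtain c a r where s1_split': "s1 = (c *\<^sub>R s + a *\<^sub>R n) + r" and rs: "eta r s = 0" "eta s r = 0"
    and rn: "eta r n = 0" "eta n r = 0"
    using orthogonal_decomposition symmetric by metis
  define s2 where "s2 = ?B s1"
  define p where "p = c *\<^sub>R s + a *\<^sub>R n"
  define q where "q = ?B p"
  have s1_split: "s1 = p + r"
    using s1_split' by (simp add: p_def)
  have s2_split: "s2 = q + r"
    using linear_add[OF linear_hyperbolic_rotation[OF bilinear, of s n g h], of p r]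
    by (simp add: s2_def q_def s1_split[symmetric] hyperbolic_rotation_orthogonal rs rn)
  have rp: "eta r p = 0" "eta p r = 0" and rq: "eta r q = 0"
    by (simp_all add: q_def p_def hyperbolic_rotation_plane bilinear_simps rs rn)
  have "eta s1 s1 = a\<^sup>2 - c\<^sup>2 + eta r r"
    using form_plane[of c a c a]
    by (simp add: s1_split p_def[symmetric] bilinear_simps rp power2_eq_square)
  moreover have "0 \<le> eta r r"
    using spacelike[OF rs(1)] by (cases "r = 0") (auto simp: bilinear_lzero[OF bilinear])
  ultimately have ca: "0 < c\<^sup>2 - a\<^sup>2"
    using s1 by linarith
  obtain x y where s_xy: "s = x *\<^sub>R s1 + y *\<^sub>R s2"
    using s_span span_pair_coordinates unfolding s2_def by blast
  have "eta r s = (x + y) * eta r r"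
    by (simp add: s_xy s1_split s2_split bilinear_simps rp rq algebra_simps)
  then have xy: "(x + y) * eta r r = 0"
    using rs by simp
  have "r = 0"
  proof (rule ccontr)
    assume "r \<noteq> 0"
    with spacelike rs have "0 < eta r r" by blast
    with xy have "y = - x"
      by simp
    then have "s = x *\<^sub>R (p - q)"
      by (simp add: s_xy s1_split s2_split algebra_simps)
    then have "eta s s = x\<^sup>2 * eta (p - q) (p - q)"
      by (simp add: bilinear_lmul[OF bilinear] bilinear_rmul[OF bilinear] power2_eq_square)
    also have "\<dots> = x\<^sup>2 * (2 * (g - 1) * (c\<^sup>2 - a\<^sup>2))"
      using hyperbolic_rotation_displacement[OF h, of c a] by (simp flip: p_def q_def)
    also have "\<dots> \<ge> 0"
      using g ca by simp
    finally show False
      using s_unit by simp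
  qed
  then show ?thesis
    using s1_split by (simp add: p_def span_add span_mul span_base)
qed

lemma link_boost_hyperbolic_rotation:
  assumes g: "1 \<le> g" and h: "h\<^sup>2 = g\<^sup>2 - 1"
    and s1: "eta s1 s1 = -1" and s1_plane: "s1 \<in> span {s, n}"
  shows "link_boost eta s1 (hyperbolic_rotation eta s n g h s1) = hyperbolic_rotation eta s n g h"
proof
  fix w
  obtain c a where s1_eq: "s1 = c *\<^sub>R s + a *\<^sub>R n"
    using s1_plane span_pair_coordinates by blast
  define s2 where "s2 = hyperbolic_rotation eta s n g h s1"
  define c2 where "c2 = g * c + h * a"
  define a2 where "a2 = g * a + h * c"
  have s2_eq: "s2 = c2 *\<^sub>R s + a2 *\<^sub>R n"
    by (simp add: s2_def s1_eq hyperbolic_rotation_plane c2_def a2_def)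
  have ca: "c\<^sup>2 - a\<^sup>2 = 1"
    using s1 by (simp add: s1_eq form_plane power2_eq_square)
  have s1_s2: "eta s1 s2 = - g"
  proof -
    have "eta s1 s2 = a * a2 - c * c2"
      by (simp add: s1_eq s2_eq form_plane)
    then show ?thesis
      unfolding c2_def a2_def using ca by algebra
  qed
  define S where "S = eta s w"
  define N where "N = eta n w"
  define X1 where "X1 = c * S + a * N"
  define X2 where "X2 = c2 * S + a2 * N"
  have X: "eta s1 w = X1" "eta s2 w = X2"
    by (simp_all add: s1_eq s2_eq X1_def X2_def S_def N_def bilinear_simps)
  have "link_boost eta s1 s2 w = w + (1 / (1 + g)) *\<^sub>R ((X1 + X2) *\<^sub>R s1 + (X2 - X1 - 2 * g * X1) *\<^sub>R s2)"
    by (simp add: link_boost_def tens_def wedge_def s1_s2 X algebra_simps)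
  also have "\<dots> = w + (1 / (1 + g)) *\<^sub>R (((X1 + X2) * c + (X2 - X1 - 2 * g * X1) * c2) *\<^sub>R s
      + ((X1 + X2) * a + (X2 - X1 - 2 * g * X1) * a2) *\<^sub>R n)"
    by (simp add: s1_eq s2_eq algebra_simps)
  also have "(X1 + X2) * c + (X2 - X1 - 2 * g * X1) * c2 = (1 + g) * (h * N - (g - 1) * S)"
    unfolding X1_def X2_def c2_def a2_def using ca h by algebra
  also have "(X1 + X2) * a + (X2 - X1 - 2 * g * X1) * a2 = (1 + g) * ((g - 1) * N - h * S)"
    unfolding X1_def X2_def c2_def a2_def using ca h by algebra
  also have "w + (1 / (1 + g)) *\<^sub>R (((1 + g) * (h * N - (g - 1) * S)) *\<^sub>R s
      + ((1 + g) * ((g - 1) * N - h * S)) *\<^sub>R n) = w + (h * N - (g - 1) * S) *\<^sub>R s + ((g - 1) * N - h * S) *\<^sub>R n"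
    using g by (simp add: scaleR_add_right add.assoc)
  also have "\<dots> = hyperbolic_rotation eta s n g h w"
    by (simp add: hyperbolic_rotation_def S_def N_def algebra_simps)
  finally show "link_boost eta s1 (hyperbolic_rotation eta s n g h s1) w = hyperbolic_rotation eta s n g h w"
    by (simp add: s2_def)
qed

end

lemma boost_eq_hyperbolic_rotation:
  fixes eta :: "'a::real_vector \<Rightarrow> 'a \<Rightarrow> real"
  assumes eta: "bilinear eta" and sym: "\<And>u v. eta u v = eta v u"
    and s: "eta s s = -1" and b: "eta b s = 0" and b_pos: "0 < eta b b" and b_lt: "eta b b < 1"
  obtains n g h where "timelike_frame eta s n" and "1 \<le> g" and "h\<^sup>2 = g\<^sup>2 - 1"
    and "boost eta s b = hyperbolic_rotation eta s n g h"
proof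
  define \<beta> where "\<beta> = sqrt (eta b b)"
  define n where "n = (1 / \<beta>) *\<^sub>R b"
  define g where "g = 1 / sqrt (1 - \<beta>\<^sup>2)"
  have \<beta>: "0 < \<beta>" "\<beta>\<^sup>2 = eta b b"
    using b_pos by (simp_all add: \<beta>_def)
  show "timelike_frame eta s n"
    using \<beta> b_pos
    by unfold_locales (simp_all add: n_def eta sym s b bilinear_lmul bilinear_rmul power2_eq_square)
  have "0 < 1 - \<beta>\<^sup>2" "1 - \<beta>\<^sup>2 \<le> 1"
    using \<beta> b_pos b_lt by simp_all
  then show "1 \<le> g"
    by (simp add: g_def)
  have "g\<^sup>2 = 1 / (1 - \<beta>\<^sup>2)"
    using \<open>0 < 1 - \<beta>\<^sup>2\<close> by (simp add: g_def power_divide)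
  then show "(\<beta> * g)\<^sup>2 = g\<^sup>2 - 1"
    using \<open>0 < 1 - \<beta>\<^sup>2\<close> by (simp add: power_mult_distrib field_simps)
  have "b \<noteq> 0"
    using b_pos by (auto simp: bilinear_lzero[OF eta])
  then have "boost eta s b = (\<lambda>w. w + (g - 1) *\<^sub>R (- tens eta s s w + tens eta n n w)
      + (\<beta> * g) *\<^sub>R (tens eta s n w - tens eta n s w))"
    unfolding boost_def Let_def \<beta>_def[symmetric] n_def[symmetric] g_def[symmetric] by simp
  then show "boost eta s b = hyperbolic_rotation eta s n g (\<beta> * g)"
    by (simp add: fun_eq_iff tens_def hyperbolic_rotation_def algebra_simps)
qed

lemma boost_eq_link_boost:
  fixes eta :: "'a::euclidean_space \<Rightarrow> 'a \<Rightarrow> real"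
  assumes eta: "lorentz_form eta" and s: "eta s s = -1" and s1: "eta s1 s1 = -1"
    and s_span: "s \<in> span {s1, s2}"
    and b: "b \<in> tangent eta s" and b_lt: "eta b b < 1" and b_boost: "boost eta s b s1 = s2"
  shows "boost eta s b = link_boost eta s1 s2"
proof (cases "b = 0")
  case True
  then show ?thesis
    using b_boost s1 by (simp add: boost_def link_boost_self)
next
  case False
  have bil: "bilinear eta" and sym: "\<And>u v. eta u v = eta v u"
    using eta by (simp_all add: lorentz_form_def)
  have spacelike: "0 < eta u u" if "eta u s = 0" and "u \<noteq> 0" for u
    using lorentz_form_tangent_spacelike[OF eta s that(1)] that(2) by fastforce
  obtain n g h where frame: "timelike_frame eta s n" and g: "1 \<le> g" and h: "h\<^sup>2 = g\<^sup>2 - 1"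
    and B: "boost eta s b = hyperbolic_rotation eta s n g h"
    using boost_eq_hyperbolic_rotation[OF bil sym s _ spacelike b_lt] b False
    by (auto simp: tangent_def)
  have "s1 \<in> span {s, n}"
    using timelike_frame.hyperbolic_rotation_start_in_plane[OF frame spacelike g h s1] s_span b_boost B
    by simp
  then show ?thesis
    using timelike_frame.link_boost_hyperbolic_rotation[OF frame g h s1] b_boost B by simp
qed

theorem mainTheorem4:
  fixes eta :: "'a::euclidean_space \<Rightarrow> 'a \<Rightarrow> real"
    and S :: "'a set"
    and s0 s1 s2 s s' b b' :: 'a
  assumes eta: "lorentz_form eta"
    and s0: "s0 \<in> hyperboloid eta"
    and S_def: "S = connected_component_set (hyperboloid eta) s0"
    and s1: "s1 \<in> S" and s2: "s2 \<in> S"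
    and s: "s \<in> S" and s_span: "s \<in> span {s1, s2}"
    and s': "s' \<in> S" and s'_span: "s' \<in> span {s1, s2}"
    and b: "b \<in> tangent eta s" and b_norm: "eta b b < 1"
    and b_boost: "boost eta s b s1 = s2"
    and b': "b' \<in> tangent eta s'" and b'_norm: "eta b' b' < 1"
    and b'_boost: "boost eta s' b' s1 = s2"
  shows "boost eta s b = boost eta s' b'
     \<and> boost eta s' b' =
         (\<lambda>w. w + (1 / (1 + (- eta s1 s2))) *\<^sub>R
            (tens eta s1 s1 w + tens eta s2 s2 w + wedge eta s1 s2 w
             - (2 * (- eta s1 s2)) *\<^sub>R tens eta s2 s1 w))"
proof -
  have "S \<subseteq> hyperboloid eta"
    unfolding S_def by (rule connected_component_subset)
  then have unit: "eta s s = -1" "eta s' s' = -1" "eta s1 s1 = -1"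
    using s s' s1 by (auto simp: hyperboloid_def)
  have "boost eta s b = link_boost eta s1 s2"
    using boost_eq_link_boost[OF eta unit(1) unit(3) s_span b b_norm b_boost] .
  moreover have "boost eta s' b' = link_boost eta s1 s2"
    using boost_eq_link_boost[OF eta unit(2) unit(3) s'_span b' b'_norm b'_boost] .
  ultimately show ?thesis
    by (simp add: link_boost_def)
qed

end
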